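(* Let $3\le a<b$ be integers and for $z\in(0,1)$, $z\ne z_r$, let $h(z)=\dfrac{a z^{a-b}-b-f(z)\big(a(a-1)z^{a-b}-b(b-1)\big)}{b\big((b-1)f(z)-1\big)}$. Then: (i) $h$ has a pole at $z=z_r$ (its denominator vanishes in $(0,1)$ exactly at $z_r$); (ii) $\lim_{z\to0}h(z)=-\infty$; (iii) $\lim_{z\to z_r}h(z)=+\infty$; (iv) $h(z)\in(-\infty,1]$ for all $z\in(0,z_l]$; (v) $h(z)\in(1,+\infty)$ for all $z\in(z_l,z_r)$, and $h(z_l)=1$; (vi) $h(z)\in(-\infty,1)$ for all $z\in(z_r,1)$; (vii) for $z\in(0,1)\setminus\{z_r\}$: $\frac{\partial h}{\partial z}(z)>0 \iff g(z)>0$; (viii) $h$ is strictly increasing on $(0,z_l]$; (ix) $h$ is strictly increasing on $(z_r,1)$; (x) if $\min_z g(z)\ge0$, then $h$ is strictly increasing on $[z_l,z_r)$; (xi) if $\min_z g(z)<0$, then on $[z_l,z_r)$ the function $h$ is strictly increasing up to a local maximum at $z_1$, then strictly decreasing to a local minimum at $z_2$, then strictly increasing afterwards.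
   Context: $f(z)=\frac{-\ln(1-z)(1-z)}{z}$ and $g(z)=f(z)(b-1)(a-1)+\frac1{1-z}+2-b-a$ for $z\in(0,1)$. $z_l$ (resp. $z_r$) is the unique $z\in(0,1)$ with $f(z)=\frac1{a-1}$ (resp. $\frac1{b-1}$). When $g$ has zeros in $(0,1)$, $z_1$ and $z_2$ are the smallest and largest of them. *)

theory Defs
  imports "HOL-Analysis.Analysis"
begin

definition ff :: "real \<Rightarrow> real" where
  "ff z = - ln (1 - z) * (1 - z) / z"

definition gg :: "nat \<Rightarrow> nat \<Rightarrow> real \<Rightarrow> real" where
  "gg a b z = ff z * (real b - 1) * (real a - 1) + 1 / (1 - z) + 2 - real b - real a"

definition zl :: "nat \<Rightarrow> real" where
  "zl a = (THE z. z \<in> {0<..<1} \<and> ff z = 1 / (real a - 1))"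

definition zr :: "nat \<Rightarrow> real" where
  "zr b = (THE z. z \<in> {0<..<1} \<and> ff z = 1 / (real b - 1))"

definition z1 :: "nat \<Rightarrow> nat \<Rightarrow> real" where
  "z1 a b = (LEAST z. z \<in> {0<..<1} \<and> gg a b z = 0)"

definition z2 :: "nat \<Rightarrow> nat \<Rightarrow> real" where
  "z2 a b = (GREATEST z. z \<in> {0<..<1} \<and> gg a b z = 0)"

definition hh :: "nat \<Rightarrow> nat \<Rightarrow> real \<Rightarrow> real" where
  "hh a b z = (real a * z powr (real a - real b) - real b
      - ff z * (real a * (real a - 1) * z powr (real a - real b) - real b * (real b - 1)))
      / (real b * ((real b - 1) * ff z - 1))"

end

theory Submission
  imports Defs "HOL-Real_Asymp.Real_Asymp"
begin

(*
  Write f = ff, g = gg a b, h = hh a b, and for n \<ge> 3 put L_n(z) = 1 - (n - 1) f(z).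

  The function f decreases strictly from 1 to 0 on (0,1), because f(z) > 1 - z makes its
  derivative (1 - f(z)/(1-z))/z negative.  Hence each level 1/(n-1) is attained exactly once,
  at zl n (zr is the same function, so zr b = zl b), and L_n has the sign of z - zl n.

  The analysis of h rests on two identities, valid for z \<noteq> zr b:
    h(z) = 1 - (a/b) z^(a-b) L_a(z) / L_b(z)       (pole, limits, sign of h - 1: parts i-vi)
    h'(z) = K(z) g(z)  with  K(z) > 0              (part vii and monotonicity of h)
  and on the sign structure of g:
    f g = L_a L_b + (f/(1-z) - 1) shows g > 0 outside (zl a, zr b), and
    g' = ((a-1)(b-1) s + 1)/(1-z)^2, where s = (1-z)^2 f' is strictly increasing, shows that g is
    strictly quasiconvex; so g vanishes at most once if g \<ge> 0, and otherwise has exactly two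
    zeros z1 < z2 in (zl a, zr b) with g < 0 precisely between them.
*)

lemma strict_quasiconvex_by_derivative:
  fixes F D :: "real \<Rightarrow> real"
  assumes "x < y" "y < w"
    and deriv: "\<And>t. x \<le> t \<Longrightarrow> t \<le> w \<Longrightarrow> (F has_real_derivative D t) (at t)"
    and sign: "\<And>s t. x < s \<Longrightarrow> s < t \<Longrightarrow> t < w \<Longrightarrow> 0 \<le> D s \<Longrightarrow> 0 < D t"
  shows "F y < max (F x) (F w)"
proof (rule ccontr)
  assume "\<not> ?thesis"
  then have up: "F x \<le> F y" and down: "F w \<le> F y" by auto
  obtain s where s: "x < s" "s < y" "F y - F x = (y - x) * D s"
    using MVT2[OF assms(1), of F D] deriv assms by auto
  obtain t where t: "y < t" "t < w" "F w - F y = (w - y) * D t"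
    using MVT2[OF assms(2), of F D] deriv assms by auto
  have "0 \<le> (y - x) * D s" using s up by simp
  then have "0 \<le> D s" using assms(1) by (simp add: zero_le_mult_iff)
  moreover have "(w - y) * D t \<le> 0" using t down by simp
  then have "D t \<le> 0" using assms(2) by (simp add: mult_le_0_iff)
  ultimately show False using sign[of s t] s t by auto
qed

lemma local_max_from_interval:
  fixes F :: "real \<Rightarrow> real"
  assumes "p < c" "c < q" "\<And>y. p < y \<Longrightarrow> y < q \<Longrightarrow> F y \<le> F c"
  shows "\<exists>d>0. \<forall>y. \<bar>y - c\<bar> < d \<longrightarrow> F y \<le> F c"
  by (rule exI[of _ "min (c - p) (q - c)"]) (use assms in auto)

section \<open>The function f\<close>

lemma neg_ln_one_minus_gt:
  fixes z :: real
  assumes "0 < z" "z < 1"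
  shows "z + z^2/2 < - ln (1 - z)"
proof -
  let ?d = "\<lambda>t::real. - ln (1 - t) - t - t^2/2"
  have "?d 0 < ?d z"
  proof (rule DERIV_pos_imp_increasing_open[OF assms(1)])
    fix x :: real assume x: "0 < x" "x < z"
    have "(?d has_real_derivative (1/(1-x) - 1 - x)) (at x)"
      using x assms by (auto intro!: derivative_eq_intros simp: field_simps)
    moreover have "1/(1-x) - 1 - x = x^2/(1-x)"
      using x assms by (simp add: field_simps power2_eq_square)
    ultimately show "\<exists>y. (?d has_real_derivative y) (at x) \<and> 0 < y"
      using x assms by auto
  qed (use assms in \<open>intro continuous_intros; auto\<close>)
  then show ?thesis by simp
qed

text \<open>The key inequality f(z) > 1 - z; it makes f decreasing and g positive near the ends.\<close>
lemma ff_gt_one_minus: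
  assumes "0 < z" "z < 1"
  shows "1 - z < ff z"
proof -
  have "0 < z^2/2" using assms by simp
  then have "z < - ln (1 - z)" using neg_ln_one_minus_gt[OF assms] by linarith
  then have "z * (1 - z) < - ln (1 - z) * (1 - z)" using assms by (intro mult_strict_right_mono) auto
  then show ?thesis using assms unfolding ff_def by (simp add: field_simps)
qed

lemma ff_pos: "0 < z \<Longrightarrow> z < 1 \<Longrightarrow> 0 < ff z"
  using ff_gt_one_minus[of z] by simp

lemma ff_has_derivative:
  assumes "0 < z" "z < 1"
  shows "(ff has_real_derivative (1 - ff z/(1-z))/z) (at z)"
  unfolding ff_def[abs_def] using assms
  by (auto intro!: derivative_eq_intros simp: ff_def field_simps power2_eq_square)

lemma ff_continuous_on: "0 < x \<Longrightarrow> y < 1 \<Longrightarrow> continuous_on {x..y} ff"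
  by (intro continuous_at_imp_continuous_on ballI DERIV_isCont[OF ff_has_derivative]) auto

lemma ff_strict_antimono: "strict_antimono_on {0<..<1} ff"
proof (rule monotone_onI)
  fix x y :: real assume xy: "x \<in> {0<..<1}" "y \<in> {0<..<1}" "x < y"
  show "ff y < ff x"
  proof (rule DERIV_neg_imp_decreasing_open[OF xy(3)])
    fix t assume t: "x < t" "t < y"
    then have "1 < ff t / (1 - t)" using ff_gt_one_minus[of t] xy by simp
    then have "(1 - ff t/(1-t))/t < 0" using t xy by (simp add: divide_neg_pos)
    then show "\<exists>d. (ff has_real_derivative d) (at t) \<and> d < 0"
      using ff_has_derivative[of t] t xy by auto
  qed (use xy ff_continuous_on in auto)
qed

lemma ff_less_iff: "x \<in> {0<..<1} \<Longrightarrow> y \<in> {0<..<1} \<Longrightarrow> ff x < ff y \<longleftrightarrow> y < x"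
  using monotone_onD[OF ff_strict_antimono, of x y] monotone_onD[OF ff_strict_antimono, of y x]
  by (cases x y rule: linorder_cases) auto

lemma ff_eq_iff: "x \<in> {0<..<1} \<Longrightarrow> y \<in> {0<..<1} \<Longrightarrow> ff x = ff y \<longleftrightarrow> x = y"
  using ff_less_iff[of x y] ff_less_iff[of y x] by (cases x y rule: linorder_cases) auto

lemma ff_at_0: "(ff \<longlongrightarrow> 1) (at_right 0)"
  unfolding ff_def[abs_def] by real_asymp

lemma ff_at_1: "(ff \<longlongrightarrow> 0) (at_left 1)"
  unfolding ff_def[abs_def] by real_asymp

text \<open>f is a bijection of (0,1) onto itself; this makes zl and zr well defined.\<close>
lemma ff_attains_unique:
  assumes "0 < t" "t < 1"
  shows "\<exists>!z. z \<in> {0<..<1} \<and> ff z = t"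
proof -
  have "eventually (\<lambda>z. t < ff z) (at_right 0)"
    using order_tendstoD(1)[OF ff_at_0 assms(2)] .
  then obtain d where d: "0 < d" "\<And>y. 0 < y \<Longrightarrow> y < d \<Longrightarrow> t < ff y"
    unfolding eventually_at_right_field by blast
  define x0 where "x0 = min (d/2) (1/2)"
  have x0: "0 < x0" "x0 < 1" "t < ff x0" using d unfolding x0_def by auto
  have "eventually (\<lambda>z. ff z < t \<and> x0 < z) (at_left 1)"
    using order_tendstoD(2)[OF ff_at_1 assms(1)] eventually_at_left_real[OF x0(2)]
    by eventually_elim auto
  then obtain d' where d': "d' < 1" "\<And>y. d' < y \<Longrightarrow> y < 1 \<Longrightarrow> ff y < t \<and> x0 < y"
    unfolding eventually_at_left_field by blast
  define x1 where "x1 = (max d' x0 + 1) / 2"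
  have x1: "x0 < x1" "x1 < 1" "ff x1 < t"
    using d'(2)[of x1] d'(1) x0 unfolding x1_def by auto
  obtain z where z: "x0 \<le> z" "z \<le> x1" "ff z = t"
    using IVT2'[of ff x1 t x0] x0 x1 ff_continuous_on[of x0 x1] by auto
  then have "z \<in> {0<..<1}" using x0 x1 by auto
  with z show ?thesis using ff_eq_iff by blast
qed

lemma zl_props:
  assumes "3 \<le> n"
  shows "zl n \<in> {0<..<1}" and "ff (zl n) = 1 / (real n - 1)"
proof -
  have "0 < 1 / (real n - 1)" "1 / (real n - 1) < 1" using assms by auto
  from theI'[OF ff_attains_unique[OF this]] show "zl n \<in> {0<..<1}" "ff (zl n) = 1 / (real n - 1)"
    unfolding zl_def by auto
qed

lemma zr_eq_zl: "zr n = zl n"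
  unfolding zr_def zl_def ..

definition lvl :: "nat \<Rightarrow> real \<Rightarrow> real" where
  "lvl n z = 1 - (real n - 1) * ff z"

lemma lvl_sign:
  assumes "3 \<le> n" "z \<in> {0<..<1}"
  shows "lvl n z < 0 \<longleftrightarrow> z < zl n" "lvl n z = 0 \<longleftrightarrow> z = zl n" "0 < lvl n z \<longleftrightarrow> zl n < z"
proof -
  have e: "lvl n z = (real n - 1) * (ff (zl n) - ff z)"
    using zl_props[OF assms(1)] assms(1) unfolding lvl_def by (simp add: field_simps)
  have p: "real n - 1 > 0" using assms by simp
  show "lvl n z < 0 \<longleftrightarrow> z < zl n"
    unfolding e using ff_less_iff[of "zl n" z] zl_props(1)[OF assms(1)] assms p
    by (simp add: mult_less_0_iff)
  show "lvl n z = 0 \<longleftrightarrow> z = zl n"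
    unfolding e using ff_eq_iff[of "zl n" z] zl_props(1)[OF assms(1)] assms p by auto
  show "0 < lvl n z \<longleftrightarrow> zl n < z"
    unfolding e using ff_less_iff[of z "zl n"] zl_props(1)[OF assms(1)] assms p
    by (simp add: zero_less_mult_iff)
qed

section \<open>Identities and derivatives for g and h\<close>

text \<open>Relates g to the levels: it shows g > 0 wherever L_a and L_b have the same sign.\<close>
lemma gg_identity: "ff z * gg a b z = lvl a z * lvl b z + (ff z / (1 - z) - 1)"
  unfolding gg_def lvl_def by (simp add: algebra_simps)

text \<open>The scaled slope (1-z)^2 f'(z) of f; it is strictly increasing, which drives the
  quasiconvexity of g.\<close>
definition ff_slope :: "real \<Rightarrow> real" where
  "ff_slope z = (z + ln (1 - z)) * (1 - z)^2 / z^2"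

lemma ff_derivative_eq:
  assumes "0 < z" "z < 1"
  shows "(1 - ff z/(1-z))/z = ff_slope z / (1-z)^2"
proof -
  have "(1 - ff z/(1-z))/z = (z + ln (1 - z)) / z^2"
    unfolding ff_def using assms by (simp add: field_simps power2_eq_square)
  also have "\<dots> = ff_slope z / (1-z)^2"
    unfolding ff_slope_def using assms by simp
  finally show ?thesis .
qed

lemma ff_slope_has_derivative:
  assumes "0 < z" "z < 1"
  shows "(ff_slope has_real_derivative (1 - z) * (- 2 * ln (1 - z) - 2 * z - z^2) / z^3) (at z)"
  unfolding ff_slope_def[abs_def] using assms
  apply (auto intro!: derivative_eq_intros)
   apply (simp add: field_simps power2_eq_square power3_eq_cube)
  apply (simp add: algebra_simps eval_nat_numeral)
  done

lemma ff_slope_strict_mono: "strict_mono_on {0<..<1} ff_slope"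
proof (rule strict_mono_onI)
  fix x y :: real assume xy: "x \<in> {0<..<1}" "y \<in> {0<..<1}" "x < y"
  show "ff_slope x < ff_slope y"
  proof (rule DERIV_pos_imp_increasing_open[OF xy(3)])
    fix t assume t: "x < t" "t < y"
    then have "0 < - 2 * ln (1 - t) - 2 * t - t^2" using neg_ln_one_minus_gt[of t] xy by auto
    then have "0 < (1 - t) * (- 2 * ln (1 - t) - 2 * t - t^2) / t^3" using t xy by simp
    then show "\<exists>d. (ff_slope has_real_derivative d) (at t) \<and> 0 < d"
      using ff_slope_has_derivative[of t] t xy by auto
  next
    show "continuous_on {x..y} ff_slope"
      using xy by (intro continuous_at_imp_continuous_on ballI DERIV_isCont[OF ff_slope_has_derivative]) auto
  qed
qed

lemma gg_has_derivative:
  assumes "0 < z" "z < 1"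
  shows "(gg a b has_real_derivative ((real b - 1) * (real a - 1) * ff_slope z + 1) / (1 - z)^2) (at z)"
proof -
  have "(gg a b has_real_derivative (1 - ff z/(1-z))/z * (real b - 1) * (real a - 1) + 1/(1-z)^2) (at z)"
    unfolding gg_def[abs_def] using assms
    by (auto intro!: derivative_eq_intros ff_has_derivative simp: power2_eq_square)
  then show ?thesis
    unfolding ff_derivative_eq[OF assms] using assms by (simp add: field_simps)
qed

lemma gg_continuous_on: "0 < x \<Longrightarrow> y < 1 \<Longrightarrow> continuous_on {x..y} (gg a b)"
  by (intro continuous_at_imp_continuous_on ballI DERIV_isCont[OF gg_has_derivative]) auto

text \<open>The positive factor K with h' = K g.\<close>
definition hh_deriv_factor :: "nat \<Rightarrow> nat \<Rightarrow> real \<Rightarrow> real" where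
  "hh_deriv_factor a b z =
     real a * real b * (real b - real a) * z powr (real a - real b) * ff z / (z * (real b * lvl b z)^2)"

text \<open>The numerator of (N/D)' for h = N/D, written with P = z^(a-b), F = f(z), w = 1/z, u = 1/(1-z),
  so that P' = (a-b) P w and F' = (1 - F u) w; the result is the numerator of K times g.\<close>
lemma hh_quotient_rule_identity:
  fixes a b P F u w :: real
  shows "(a*((a-b)*P*w) - ((1 - F*u)*w*(a*(a-1)*P - b*(b-1)) + F*(a*(a-1)*((a-b)*P*w))))
           * (b*((b-1)*F - 1))
         - (a*P - b - F*(a*(a-1)*P - b*(b-1))) * (b*((b-1)*((1 - F*u)*w)))
       = a*b*(b-a)*P*F*(F*(b-1)*(a-1) + u + 2 - b - a)*w"
  by (simp add: algebra_simps)

context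
  fixes a b :: nat
  assumes ab: "3 \<le> a" "a < b"
begin

lemma b_ge_3: "3 \<le> b"
  using ab by simp

lemma zl_bounds: "0 < zl a" "zl a < 1"
  using zl_props(1)[OF ab(1)] by auto

lemma zr_bounds: "0 < zr b" "zr b < 1"
  using zl_props(1)[OF b_ge_3] zr_eq_zl by auto

lemma zl_less_zr: "zl a < zr b"
proof -
  have "1 / (real b - 1) < 1 / (real a - 1)" using ab by (intro divide_strict_left_mono) auto
  then show ?thesis
    using ff_less_iff[of "zr b" "zl a"] zl_props[OF ab(1)] zl_props[OF b_ge_3] zr_eq_zl by auto
qed

lemma lvl_b_sign:
  assumes "z \<in> {0<..<1}"
  shows "lvl b z < 0 \<longleftrightarrow> z < zr b" "lvl b z = 0 \<longleftrightarrow> z = zr b" "0 < lvl b z \<longleftrightarrow> zr b < z"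
  using lvl_sign[OF b_ge_3 assms] zr_eq_zl by auto

lemmas lvl_a_sign = lvl_sign[OF ab(1)]

section \<open>Values and limits of h\<close>

lemma hh_denominator: "real b * ((real b - 1) * ff z - 1) = - (real b * lvl b z)"
  unfolding lvl_def by (simp add: algebra_simps)

lemma hh_pole: "z \<in> {0<..<1} \<Longrightarrow> real b * ((real b - 1) * ff z - 1) = 0 \<longleftrightarrow> z = zr b"
  unfolding hh_denominator using lvl_b_sign(2)[of z] ab by auto

lemma hh_eq:
  assumes "z \<in> {0<..<1}" "z \<noteq> zr b"
  shows "hh a b z = 1 - (real a / real b) * z powr (real a - real b) * (lvl a z / lvl b z)"
proof -
  have "lvl b z \<noteq> 0" using lvl_b_sign(2)[OF assms(1)] assms(2) by simp
  have "real a * z powr (real a - real b) - real b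
      - ff z * (real a * (real a - 1) * z powr (real a - real b) - real b * (real b - 1))
    = real a * z powr (real a - real b) * lvl a z - real b * lvl b z"
    unfolding lvl_def by (simp add: algebra_simps)
  then have "hh a b z = (real a * z powr (real a - real b) * lvl a z - real b * lvl b z)
      / (- (real b * lvl b z))"
    unfolding hh_def hh_denominator by simp
  then show ?thesis using \<open>lvl b z \<noteq> 0\<close> ab by (simp add: field_simps)
qed

lemma hh_coefficient_pos: "0 < z \<Longrightarrow> 0 < real a / real b * z powr (real a - real b)"
  using ab by simp

lemma hh_zl: "hh a b (zl a) = 1"
  using hh_eq[of "zl a"] lvl_a_sign(2)[of "zl a"] zl_bounds zl_less_zr by simp

text \<open>Parts (iv)--(vi): h - 1 has the sign of -L_a/L_b.\<close>
lemma hh_le_1_left: "z \<in> {0<..zl a} \<Longrightarrow> hh a b z \<le> 1"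
proof -
  assume z: "z \<in> {0<..zl a}"
  then have z01: "z \<in> {0<..<1}" "z \<noteq> zr b" using zl_bounds zl_less_zr by auto
  have "lvl a z \<le> 0" using lvl_a_sign[OF z01(1)] z by force
  moreover have "lvl b z < 0" using lvl_b_sign(1)[OF z01(1)] z zl_less_zr by simp
  ultimately have "0 \<le> lvl a z / lvl b z" by (simp add: divide_nonpos_neg)
  then show ?thesis
    using hh_eq[OF z01] mult_nonneg_nonneg[OF less_imp_le[OF hh_coefficient_pos]] z by fastforce
qed

lemma hh_gt_1_middle: "z \<in> {zl a<..<zr b} \<Longrightarrow> 1 < hh a b z"
proof -
  assume z: "z \<in> {zl a<..<zr b}"
  then have z01: "z \<in> {0<..<1}" "z \<noteq> zr b" using zl_bounds zr_bounds by auto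
  have "lvl a z / lvl b z < 0"
    using lvl_a_sign(3)[OF z01(1)] lvl_b_sign(1)[OF z01(1)] z by (simp add: divide_pos_neg)
  then show ?thesis using hh_eq[OF z01] mult_pos_neg[OF hh_coefficient_pos] z01 by fastforce
qed

lemma hh_lt_1_right: "z \<in> {zr b<..<1} \<Longrightarrow> hh a b z < 1"
proof -
  assume z: "z \<in> {zr b<..<1}"
  then have z01: "z \<in> {0<..<1}" "z \<noteq> zr b" using zr_bounds by auto
  have "0 < lvl a z / lvl b z"
    using lvl_a_sign(3)[OF z01(1)] lvl_b_sign(3)[OF z01(1)] z zl_less_zr by simp
  then show ?thesis using hh_eq[OF z01] mult_pos_pos[OF hh_coefficient_pos] z01 by fastforce
qed

text \<open>Part (ii): near 0, L_a/L_b tends to (a-2)/(b-2) > 0 while z^(a-b) blows up.\<close>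
lemma hh_at_0: "filterlim (hh a b) at_bot (at_right 0)"
proof -
  let ?c = "real a / real b * ((1 - (real a - 1) * 1) / (1 - (real b - 1) * 1))"
  have "eventually (\<lambda>z. z \<in> {0<..<1} \<and> z \<noteq> zr b) (at_right 0)"
    using eventually_at_right_real[OF zr_bounds(1)] by eventually_elim (use zr_bounds in auto)
  then have eq: "eventually (\<lambda>z. - 1 + (real a / real b * (lvl a z / lvl b z)) * z powr (real a - real b)
      = - hh a b z) (at_right 0)"
    by eventually_elim (simp add: hh_eq)
  have "((\<lambda>z. real a / real b * (lvl a z / lvl b z)) \<longlongrightarrow> ?c) (at_right 0)"
    unfolding lvl_def using ab by (intro tendsto_intros ff_at_0) auto
  moreover have "0 < ?c"
  proof -
    have "0 < (1 - (real a - 1) * 1) / (1 - (real b - 1) * 1)" using ab by (intro divide_neg_neg) auto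
    moreover have "0 < real a / real b" using ab by simp
    ultimately show ?thesis by (rule mult_pos_pos[rotated])
  qed
  moreover have "filterlim (\<lambda>z. z powr (real a - real b)) at_top (at_right 0)"
    using ab by real_asymp
  ultimately have "filterlim (\<lambda>z. - 1 + (real a / real b * (lvl a z / lvl b z)) * z powr (real a - real b))
      at_top (at_right 0)"
    by (intro filterlim_tendsto_add_at_top[OF tendsto_const] filterlim_tendsto_pos_mult_at_top)
  then have "filterlim (\<lambda>z. - hh a b z) at_top (at_right 0)"
    using filterlim_cong[OF refl refl eq] by simp
  then show ?thesis by (simp add: filterlim_uminus_at_bot)
qed

text \<open>Part (iii): left of zr b, L_b tends to 0 from below while the rest tends to a positive limit.\<close>
lemma hh_at_zr: "filterlim (hh a b) at_top (at_left (zr b))"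
proof -
  let ?q = "\<lambda>z. real a / real b * z powr (real a - real b) * lvl a z"
  have ev: "eventually (\<lambda>z. z \<in> {zl a<..<zr b}) (at_left (zr b))"
    using eventually_at_left_real[OF zl_less_zr] by eventually_elim auto
  then have eq: "eventually (\<lambda>z. 1 + ?q z * inverse (- lvl b z) = hh a b z) (at_left (zr b))"
    by eventually_elim (use zl_bounds zr_bounds in \<open>simp add: hh_eq divide_inverse\<close>)
  have ff_cont: "(ff \<longlongrightarrow> ff (zr b)) (at_left (zr b))"
    using DERIV_isCont[OF ff_has_derivative[OF zr_bounds]] unfolding isCont_def
    by (rule tendsto_within_subset) auto
  have "(?q \<longlongrightarrow> ?q (zr b)) (at_left (zr b))"
    unfolding lvl_def using zr_bounds by (intro tendsto_intros ff_cont) auto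
  moreover have "0 < ?q (zr b)"
    using ab zr_bounds lvl_a_sign(3)[of "zr b"] zl_less_zr by (intro mult_pos_pos) auto
  moreover have "((\<lambda>z. - lvl b z) \<longlongrightarrow> 0) (at_left (zr b))"
  proof -
    have "((\<lambda>z. - lvl b z) \<longlongrightarrow> - lvl b (zr b)) (at_left (zr b))"
      unfolding lvl_def by (intro tendsto_intros ff_cont)
    then show ?thesis using lvl_b_sign(2)[of "zr b"] zr_bounds by simp
  qed
  moreover have "eventually (\<lambda>z. 0 < - lvl b z) (at_left (zr b))"
    using ev by eventually_elim (use lvl_b_sign(1) zl_bounds zr_bounds in force)
  ultimately have "filterlim (\<lambda>z. 1 + ?q z * inverse (- lvl b z)) at_top (at_left (zr b))"
    by (intro filterlim_tendsto_add_at_top[OF tendsto_const] filterlim_tendsto_pos_mult_at_top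
        filterlim_inverse_at_top)
  then show ?thesis using filterlim_cong[OF refl refl eq] by simp
qed

lemma hh_deriv_factor_pos:
  assumes "z \<in> {0<..<1}" "z \<noteq> zr b"
  shows "0 < hh_deriv_factor a b z"
proof -
  have "lvl b z \<noteq> 0" using lvl_b_sign(2)[OF assms(1)] assms(2) by simp
  then have "0 < (real b * lvl b z)^2" using ab by simp
  then show ?thesis
    unfolding hh_deriv_factor_def using ab assms ff_pos[of z] by (intro divide_pos_pos mult_pos_pos) auto
qed

lemma hh_has_derivative:
  assumes "z \<in> {0<..<1}" "z \<noteq> zr b"
  shows "(hh a b has_real_derivative hh_deriv_factor a b z * gg a b z) (at z)"
proof -
  define p where "p = (\<lambda>z::real. z powr (real a - real b))"
  define P where "P = p z"
  define F' where "F' = (1 - ff z * (1/(1-z))) * (1/z)"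
  define N' where "N' = real a * ((real a - real b) * P * (1/z))
      - (F' * (real a * (real a - 1) * P - real b * (real b - 1))
         + ff z * (real a * (real a - 1) * ((real a - real b) * P * (1/z))))"
  define D' where "D' = real b * ((real b - 1) * F')"
  let ?N = "\<lambda>z. real a * p z - real b - ff z * (real a * (real a - 1) * p z - real b * (real b - 1))"
  let ?D = "\<lambda>z. real b * ((real b - 1) * ff z - 1)"
  have z: "0 < z" "z < 1" using assms by auto
  have dP: "(p has_real_derivative (real a - real b) * P * (1/z)) (at z)"
    using has_real_derivative_powr[OF z(1), of "real a - real b"] z
    by (simp add: p_def P_def powr_diff)
  have dF: "(ff has_real_derivative F') (at z)"
    using ff_has_derivative[OF z] unfolding F'_def by (simp add: field_simps)
  have "(?N has_real_derivative N') (at z)"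
    unfolding N'_def by (auto intro!: derivative_eq_intros dP dF simp: P_def algebra_simps)
  moreover have "(?D has_real_derivative D') (at z)"
    unfolding D'_def by (auto intro!: derivative_eq_intros dF)
  moreover have "?D z \<noteq> 0" using hh_pole[OF assms(1)] assms(2) by simp
  ultimately have "((\<lambda>z. ?N z / ?D z) has_real_derivative (N' * ?D z - ?N z * D') / (?D z * ?D z)) (at z)"
    by (rule DERIV_divide)
  moreover have "(N' * ?D z - ?N z * D') / (?D z * ?D z) = hh_deriv_factor a b z * gg a b z"
    unfolding N'_def D'_def F'_def P_def[symmetric] hh_quotient_rule_identity
    unfolding hh_deriv_factor_def gg_def hh_denominator P_def p_def
    using z by (simp add: field_simps power2_eq_square)
  ultimately show ?thesis unfolding hh_def[abs_def] p_def by simp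
qed

section \<open>The zeros of g\<close>

text \<open>g > 0 outside (zl a, zr b), where L_a L_b \<ge> 0.\<close>
lemma gg_pos_outside:
  assumes "z \<in> {0<..<1}" "z \<le> zl a \<or> zr b \<le> z"
  shows "0 < gg a b z"
proof -
  have "0 \<le> lvl a z * lvl b z"
  proof (cases "z \<le> zl a")
    case True
    then have "lvl a z \<le> 0" "lvl b z < 0"
      using lvl_a_sign[OF assms(1)] lvl_b_sign[OF assms(1)] zl_less_zr by linarith+
    then show ?thesis by (simp add: mult_nonpos_nonpos)
  next
    case False
    then have "0 < lvl a z" "0 \<le> lvl b z"
      using assms lvl_a_sign[OF assms(1)] lvl_b_sign[OF assms(1)] zl_less_zr by linarith+
    then show ?thesis by simp
  qed
  moreover have "0 < ff z / (1 - z) - 1" using ff_gt_one_minus[of z] assms by simp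
  ultimately have "0 < ff z * gg a b z" using gg_identity[of z a b] by linarith
  then show ?thesis using ff_pos[of z] assms by (simp add: zero_less_mult_iff)
qed

lemma gg_quasiconvex:
  assumes "0 < x" "x < y" "y < w" "w < 1"
  shows "gg a b y < max (gg a b x) (gg a b w)"
proof (rule strict_quasiconvex_by_derivative[OF assms(2,3)])
  let ?c = "(real b - 1) * (real a - 1)"
  show "(gg a b has_real_derivative (?c * ff_slope t + 1) / (1 - t)^2) (at t)" if "x \<le> t" "t \<le> w" for t
    using gg_has_derivative that assms by simp
  fix s t assume st: "x < s" "s < t" "t < w" "0 \<le> (?c * ff_slope s + 1) / (1 - s)^2"
  have "0 \<le> ?c * ff_slope s + 1" using st assms by (auto simp: zero_le_divide_iff)
  moreover have "ff_slope s < ff_slope t"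
    using monotone_onD[OF ff_slope_strict_mono, of s t] st assms by auto
  then have "?c * ff_slope s < ?c * ff_slope t" using ab by simp
  ultimately show "0 < (?c * ff_slope t + 1) / (1 - t)^2" using st assms by simp
qed

text \<open>By quasiconvexity a nonnegative g vanishes at most once.\<close>
lemma gg_pos_but_one:
  assumes "\<forall>z\<in>{0<..<1}. 0 \<le> gg a b z"
  obtains c where "\<And>t. t \<in> {0<..<1} \<Longrightarrow> t \<noteq> c \<Longrightarrow> 0 < gg a b t"
proof -
  have unique: "u = v" if "u \<in> {0<..<1}" "v \<in> {0<..<1}" "gg a b u = 0" "gg a b v = 0" for u v
  proof (rule ccontr)
    assume "u \<noteq> v"
    then have "gg a b ((u + v) / 2) < 0"
      using gg_quasiconvex[of u "(u + v) / 2" v] gg_quasiconvex[of v "(u + v) / 2" u] that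
      by (cases "u < v") auto
    moreover have "(u + v) / 2 \<in> {0<..<1}" using that by auto
    then have "0 \<le> gg a b ((u + v) / 2)" using assms by blast
    ultimately show False by linarith
  qed
  show ?thesis
  proof (cases "\<exists>c\<in>{0<..<1}. gg a b c = 0")
    case True
    then obtain c where c: "c \<in> {0<..<1}" "gg a b c = 0" by blast
    have "0 < gg a b t" if "t \<in> {0<..<1}" "t \<noteq> c" for t
      using assms unique[OF that(1) c(1)] c(2) that by fastforce
    then show ?thesis by (rule that)
  next
    case False
    have "0 < gg a b t" if "t \<in> {0<..<1}" for t
      using assms False that by fastforce
    then show ?thesis using that by blast
  qed
qed

text \<open>If g takes a negative value, then by the intermediate value theorem it has a zero on each
  side of that point inside (zl a, zr b), where g is positive.\<close>
lemma gg_zeros_around: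
  assumes "w \<in> {0<..<1}" "gg a b w < 0"
  obtains x0 y0 where "zl a < x0" "x0 < w" "w < y0" "y0 < zr b" "gg a b x0 = 0" "gg a b y0 = 0"
proof -
  have w: "zl a < w" "w < zr b" using gg_pos_outside[of w] assms by force+
  have gl: "0 < gg a b (zl a)" and gr: "0 < gg a b (zr b)"
    using gg_pos_outside zl_bounds zr_bounds by auto
  obtain x0 where x0: "zl a \<le> x0" "x0 \<le> w" "gg a b x0 = 0"
    using IVT2'[of "gg a b" w 0 "zl a"] w assms gl gg_continuous_on[of "zl a" w] zl_bounds by auto
  obtain y0 where y0: "w \<le> y0" "y0 \<le> zr b" "gg a b y0 = 0"
    using IVT'[of "gg a b" w 0 "zr b"] w assms gr gg_continuous_on[of w "zr b"] zr_bounds by auto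
  have "x0 \<noteq> zl a" "x0 \<noteq> w" using x0(3) gl assms(2) by auto
  moreover have "y0 \<noteq> zr b" "y0 \<noteq> w" using y0(3) gr assms(2) by auto
  ultimately show ?thesis
    using that[of x0 y0] x0 y0 by linarith
qed

lemma gg_sign_pattern:
  assumes "\<exists>z\<in>{0<..<1}. gg a b z < 0"
  shows "zl a < z1 a b" "z1 a b < z2 a b" "z2 a b < zr b"
    and "\<And>t. 0 < t \<Longrightarrow> t < z1 a b \<Longrightarrow> 0 < gg a b t"
    and "\<And>t. z1 a b < t \<Longrightarrow> t < z2 a b \<Longrightarrow> gg a b t < 0"
    and "\<And>t. z2 a b < t \<Longrightarrow> t < 1 \<Longrightarrow> 0 < gg a b t"
proof -
  obtain w where w: "w \<in> {0<..<1}" "gg a b w < 0" using assms by blast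
  obtain x0 y0 where xy: "zl a < x0" "x0 < w" "w < y0" "y0 < zr b" "gg a b x0 = 0" "gg a b y0 = 0"
    using gg_zeros_around[OF w] .
  have in01: "0 < x0" "y0 < 1" using xy zl_bounds zr_bounds by auto
  have left: "0 < gg a b t" if "0 < t" "t < x0" for t
    using gg_quasiconvex[of t x0 w] that xy w by auto
  have middle: "gg a b t < 0" if "x0 < t" "t < y0" for t
    using gg_quasiconvex[of x0 t y0] that xy in01 by auto
  have right: "0 < gg a b t" if "y0 < t" "t < 1" for t
    using gg_quasiconvex[of x0 y0 t] that xy in01 by auto
  have zeros: "t = x0 \<or> t = y0" if "0 < t" "t < 1" "gg a b t = 0" for t
  proof (rule ccontr)
    assume "\<not> (t = x0 \<or> t = y0)"
    then consider "t < x0" | "x0 < t \<and> t < y0" | "y0 < t" by linarith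
    then show False using left[of t] middle[of t] right[of t] that by cases auto
  qed
  have z1: "z1 a b = x0" unfolding z1_def
  proof (rule Least_equality)
    fix y assume "y \<in> {0<..<1} \<and> gg a b y = 0"
    then show "x0 \<le> y" using zeros[of y] xy by auto
  qed (use xy in01 in auto)
  have z2: "z2 a b = y0" unfolding z2_def
  proof (rule Greatest_equality)
    fix y assume "y \<in> {0<..<1} \<and> gg a b y = 0"
    then show "y \<le> y0" using zeros[of y] xy by auto
  qed (use xy in01 in auto)
  show "zl a < z1 a b" "z1 a b < z2 a b" "z2 a b < zr b"
    unfolding z1 z2 using xy by simp_all
  show "\<And>t. 0 < t \<Longrightarrow> t < z1 a b \<Longrightarrow> 0 < gg a b t"
    and "\<And>t. z1 a b < t \<Longrightarrow> t < z2 a b \<Longrightarrow> gg a b t < 0"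
    and "\<And>t. z2 a b < t \<Longrightarrow> t < 1 \<Longrightarrow> 0 < gg a b t"
    unfolding z1 z2 by (fact left middle right)+
qed

section \<open>Monotonicity of h\<close>

lemma deriv_hh_pos_iff:
  assumes "z \<in> {0<..<1} - {zr b}"
  shows "0 < deriv (hh a b) z \<longleftrightarrow> 0 < gg a b z"
proof -
  have "deriv (hh a b) z = hh_deriv_factor a b z * gg a b z"
    using hh_has_derivative assms by (intro DERIV_imp_deriv) auto
  then show ?thesis using hh_deriv_factor_pos[of z] assms by (simp add: zero_less_mult_iff)
qed

lemma hh_continuous_on:
  assumes "0 < x" "y < 1" "zr b \<notin> {x..y}"
  shows "continuous_on {x..y} (hh a b)"
proof (intro continuous_at_imp_continuous_on ballI)
  fix t assume "t \<in> {x..y}"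
  then show "isCont (hh a b) t" using assms by (intro DERIV_isCont[OF hh_has_derivative]) auto
qed

lemma hh_strict_increasing:
  assumes "0 < x" "x < y" "y < 1" "zr b \<notin> {x..y}" "\<And>t. x < t \<Longrightarrow> t < y \<Longrightarrow> 0 < gg a b t"
  shows "hh a b x < hh a b y"
proof (rule DERIV_pos_imp_increasing_open[OF assms(2) _ hh_continuous_on])
  fix t assume t: "x < t" "t < y"
  then have "0 < hh_deriv_factor a b t * gg a b t"
    using hh_deriv_factor_pos[of t] assms(1,3,4) assms(5)[OF t] by auto
  then show "\<exists>d. (hh a b has_real_derivative d) (at t) \<and> 0 < d"
    using hh_has_derivative[of t] t assms(1,3,4) by auto
qed (use assms in auto)

lemma hh_strict_decreasing:
  assumes "0 < x" "x < y" "y < 1" "zr b \<notin> {x..y}" "\<And>t. x < t \<Longrightarrow> t < y \<Longrightarrow> gg a b t < 0"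
  shows "hh a b y < hh a b x"
proof (rule DERIV_neg_imp_decreasing_open[OF assms(2) _ hh_continuous_on])
  fix t assume t: "x < t" "t < y"
  then have "hh_deriv_factor a b t * gg a b t < 0"
    using hh_deriv_factor_pos[of t] assms(1,3,4) assms(5)[OF t] by (auto simp: mult_pos_neg)
  then show "\<exists>d. (hh a b has_real_derivative d) (at t) \<and> d < 0"
    using hh_has_derivative[of t] t assms(1,3,4) by auto
qed (use assms in auto)

lemma hh_strict_increasing_but_one:
  assumes "0 < x" "x < y" "y < 1" "zr b \<notin> {x..y}"
    and "\<And>t. x < t \<Longrightarrow> t < y \<Longrightarrow> t \<noteq> c \<Longrightarrow> 0 < gg a b t"
  shows "hh a b x < hh a b y"
proof (cases "x < c \<and> c < y")
  case True
  have "hh a b x < hh a b c" by (rule hh_strict_increasing) (use True assms in auto)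
  also have "\<dots> < hh a b y" by (rule hh_strict_increasing) (use True assms in auto)
  finally show ?thesis .
next
  case False
  then show ?thesis by (intro hh_strict_increasing) (use assms in auto)
qed

text \<open>Parts (viii) and (ix): g > 0 left of zl a and right of zr b.\<close>
lemma hh_strict_mono_left: "strict_mono_on {0<..zl a} (hh a b)"
proof (rule strict_mono_onI)
  fix x y assume xy: "x \<in> {0<..zl a}" "y \<in> {0<..zl a}" "x < y"
  have "0 < gg a b t" if "x < t" "t < y" for t
    using gg_pos_outside[of t] that xy zl_bounds by simp
  then show "hh a b x < hh a b y"
    using hh_strict_increasing[of x y] xy zl_bounds zl_less_zr by simp
qed

lemma hh_strict_mono_right: "strict_mono_on {zr b<..<1} (hh a b)"
proof (rule strict_mono_onI)
  fix x y assume xy: "x \<in> {zr b<..<1}" "y \<in> {zr b<..<1}" "x < y"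
  have "0 < gg a b t" if "x < t" "t < y" for t
    using gg_pos_outside[of t] that xy zr_bounds by simp
  then show "hh a b x < hh a b y"
    using hh_strict_increasing[of x y] xy zr_bounds by simp
qed

text \<open>Part (x): if g \<ge> 0, its only possible zero does not stop h from increasing.\<close>
lemma hh_strict_mono_middle:
  assumes "\<forall>z\<in>{0<..<1}. 0 \<le> gg a b z"
  shows "strict_mono_on {zl a..<zr b} (hh a b)"
proof -
  obtain c where c: "\<And>t. t \<in> {0<..<1} \<Longrightarrow> t \<noteq> c \<Longrightarrow> 0 < gg a b t"
    using gg_pos_but_one[OF assms] by blast
  show ?thesis
  proof (rule strict_mono_onI)
    fix x y assume xy: "x \<in> {zl a..<zr b}" "y \<in> {zl a..<zr b}" "x < y"
    have "0 < gg a b t" if "x < t" "t < y" "t \<noteq> c" for t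
      using c[of t] that xy zl_bounds zr_bounds by simp
    then show "hh a b x < hh a b y"
      using hh_strict_increasing_but_one[of x y c] xy zl_bounds zr_bounds by simp
  qed
qed

lemma hh_shape_middle:
  assumes "\<exists>z\<in>{0<..<1}. gg a b z < 0"
  shows "zl a \<le> z1 a b \<and> z1 a b < z2 a b \<and> z2 a b < zr b
        \<and> strict_mono_on {zl a..z1 a b} (hh a b)
        \<and> strict_antimono_on {z1 a b..z2 a b} (hh a b)
        \<and> strict_mono_on {z2 a b..<zr b} (hh a b)
        \<and> (\<exists>d>0. \<forall>y. \<bar>y - z1 a b\<bar> < d \<longrightarrow> hh a b y \<le> hh a b (z1 a b))
        \<and> (\<exists>d>0. \<forall>y. \<bar>y - z2 a b\<bar> < d \<longrightarrow> hh a b (z2 a b) \<le> hh a b y)"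
proof -
  note z12 = gg_sign_pattern[OF assms]
  have up1: "strict_mono_on {zl a..z1 a b} (hh a b)"
  proof (rule strict_mono_onI)
    fix x y assume xy: "x \<in> {zl a..z1 a b}" "y \<in> {zl a..z1 a b}" "x < y"
    then show "hh a b x < hh a b y"
      using hh_strict_increasing[of x y] z12(1-4) zl_bounds zr_bounds by simp
  qed
  have down: "strict_antimono_on {z1 a b..z2 a b} (hh a b)"
  proof (rule monotone_onI)
    fix x y assume xy: "x \<in> {z1 a b..z2 a b}" "y \<in> {z1 a b..z2 a b}" "x < y"
    then show "hh a b y < hh a b x"
      using hh_strict_decreasing[of x y] z12(1-3,5) zl_bounds zr_bounds by simp
  qed
  have up2: "strict_mono_on {z2 a b..<zr b} (hh a b)"
  proof (rule strict_mono_onI)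
    fix x y assume xy: "x \<in> {z2 a b..<zr b}" "y \<in> {z2 a b..<zr b}" "x < y"
    then show "hh a b x < hh a b y"
      using hh_strict_increasing[of x y] z12(1-3,6) zl_bounds zr_bounds by simp
  qed
  have "\<exists>d>0. \<forall>y. \<bar>y - z1 a b\<bar> < d \<longrightarrow> hh a b y \<le> hh a b (z1 a b)"
  proof (rule local_max_from_interval[OF z12(1,2)])
    fix y assume "zl a < y" "y < z2 a b"
    then show "hh a b y \<le> hh a b (z1 a b)"
      using monotone_onD[OF up1, of y "z1 a b"] monotone_onD[OF down, of "z1 a b" y] z12(1,2)
      by (cases y "z1 a b" rule: linorder_cases) auto
  qed
  moreover have "\<exists>d>0. \<forall>y. \<bar>y - z2 a b\<bar> < d \<longrightarrow> - hh a b y \<le> - hh a b (z2 a b)"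
  proof (rule local_max_from_interval[OF z12(2,3)])
    fix y assume "z1 a b < y" "y < zr b"
    then show "- hh a b y \<le> - hh a b (z2 a b)"
      using monotone_onD[OF down, of y "z2 a b"] monotone_onD[OF up2, of "z2 a b" y] z12(2,3)
      by (cases y "z2 a b" rule: linorder_cases) auto
  qed
  ultimately show ?thesis using z12(1-3) up1 down up2 by auto
qed

end

theorem lemma3:
  fixes a b :: nat
  assumes "3 \<le> a" and "a < b"
  shows
    "(\<forall>z\<in>{0<..<1}. real b * ((real b - 1) * ff z - 1) = 0 \<longleftrightarrow> z = zr b)
   \<and> filterlim (hh a b) at_bot (at_right 0)
   \<and> filterlim (hh a b) at_top (at_left (zr b))
   \<and> (\<forall>z\<in>{0<..zl a}. hh a b z \<le> 1)
   \<and> (\<forall>z\<in>{zl a<..<zr b}. hh a b z > 1) \<and> hh a b (zl a) = 1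
   \<and> (\<forall>z\<in>{zr b<..<1}. hh a b z < 1)
   \<and> (\<forall>z\<in>{0<..<1} - {zr b}. deriv (hh a b) z > 0 \<longleftrightarrow> gg a b z > 0)
   \<and> strict_mono_on {0<..zl a} (hh a b)
   \<and> strict_mono_on {zr b<..<1} (hh a b)
   \<and> ((\<forall>z\<in>{0<..<1}. gg a b z \<ge> 0) \<longrightarrow> strict_mono_on {zl a..<zr b} (hh a b))
   \<and> ((\<exists>z\<in>{0<..<1}. gg a b z < 0) \<longrightarrow>
        zl a \<le> z1 a b \<and> z1 a b < z2 a b \<and> z2 a b < zr b
        \<and> strict_mono_on {zl a..z1 a b} (hh a b)
        \<and> strict_antimono_on {z1 a b..z2 a b} (hh a b)
        \<and> strict_mono_on {z2 a b..<zr b} (hh a b)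
        \<and> (\<exists>d>0. \<forall>y. \<bar>y - z1 a b\<bar> < d \<longrightarrow> hh a b y \<le> hh a b (z1 a b))
        \<and> (\<exists>d>0. \<forall>y. \<bar>y - z2 a b\<bar> < d \<longrightarrow> hh a b (z2 a b) \<le> hh a b y))"
  using hh_pole[OF assms] hh_at_0[OF assms] hh_at_zr[OF assms]
    hh_le_1_left[OF assms] hh_gt_1_middle[OF assms] hh_zl[OF assms] hh_lt_1_right[OF assms]
    deriv_hh_pos_iff[OF assms] hh_strict_mono_left[OF assms] hh_strict_mono_right[OF assms]
    hh_strict_mono_middle[OF assms] hh_shape_middle[OF assms]
  by blast

end
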